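(* Let $n\ge1$, $p<-n$, let $\mathcal{S}$ be a discrete subgroup of $O(n+1)$ satisfying the spanning property, and let $f$ be a positive $\mathcal{S}$-invariant function on $\mathbb{S}^n$ with $0<c_1\le f\le c_2$. There is a constant $C_n>0$ depending only on $n$ such that for every $\Omega\in\mathcal{K}_p(\mathcal{S})$ with support function $h$, $$h(x)\ge\Big[(-p)^n\cdot C_n\cdot\gamma_{\max}(\mathcal{S})\cdot\frac{\max_{\mathbb{S}^n}f}{\min_{\mathbb{S}^n}f}\Big]^{\frac{1}{n+p}}\qquad\forall x\in\mathbb{S}^n.$$
   Context: $\mathcal{K}_p(\mathcal{S})=\{\Omega\in\mathcal{K}_0(\mathcal{S}):\int_{\mathbb{S}^n}fh_\Omega^p=\int_{\mathbb{S}^n}f\}$, with $\mathcal{K}_0(\mathcal{S})$ the $\mathcal{S}$-invariant convex bodies in $\mathbb{R}^{n+1}$ containing the origin. $\gamma_{\max}(\mathcal{S})=\sup_{a\in\mathbb{S}^n}\gamma_a$, $\gamma_a=\max_{\mathbb{S}^n}h_a/\min_{\mathbb{S}^n}h_a$ with $h_a$ the support function of $P_a=\mathrm{conv}\{\phi(a):\phi\in\mathcal{S}\}$. Spanning property: every $P_a$, $a\in\mathbb{S}^n$, is a non-degenerate $(n+1)$-dimensional polytope. *)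

theory Defs
  imports "HOL-Analysis.Analysis"
begin

text \<open>The unit sphere S^n in the (n+1)-dimensional Euclidean space 'a.\<close>
abbreviation usphere :: "'a::euclidean_space set" where
  "usphere \<equiv> sphere 0 1"

text \<open>Integral over the unit sphere with respect to the surface measure, expressed via the
  cone-volume identity  int_{S^n} g d sigma = (n+1) int_{B^{n+1}} g(x/|x|) dx.\<close>
definition sphere_integral :: "('a::euclidean_space \<Rightarrow> real) \<Rightarrow> real" where
  "sphere_integral g =
     real DIM('a) * (\<integral>x. indicator (ball (0::'a) 1) x * g (x /\<^sub>R norm x) \<partial>lebesgue)"

definition support_fun :: "'a::euclidean_space set \<Rightarrow> 'a \<Rightarrow> real" where
  "support_fun K x = (SUP y\<in>K. x \<bullet> y)"

definition orth_subgroup :: "('a::euclidean_space \<Rightarrow> 'a) set \<Rightarrow> bool" where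
  "orth_subgroup S \<longleftrightarrow>
     (\<forall>\<phi>\<in>S. orthogonal_transformation \<phi>) \<and> id \<in> S \<and>
     (\<forall>\<phi>\<in>S. \<forall>\<psi>\<in>S. \<phi> \<circ> \<psi> \<in> S) \<and>
     (\<forall>\<phi>\<in>S. \<exists>\<psi>\<in>S. \<psi> \<circ> \<phi> = id)"

text \<open>Discreteness in the (operator-norm / uniform on the unit ball) topology of O(n+1):
  every element of S is isolated.\<close>
definition discrete_maps :: "('a::euclidean_space \<Rightarrow> 'a) set \<Rightarrow> bool" where
  "discrete_maps S \<longleftrightarrow>
     (\<forall>\<phi>\<in>S. \<exists>e>0. \<forall>\<psi>\<in>S. \<psi> \<noteq> \<phi> \<longrightarrow> (\<exists>x. norm x \<le> 1 \<and> dist (\<psi> x) (\<phi> x) \<ge> e))"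

definition orbit_polytope :: "('a::euclidean_space \<Rightarrow> 'a) set \<Rightarrow> 'a \<Rightarrow> 'a set" where
  "orbit_polytope S a = convex hull ((\<lambda>\<phi>. \<phi> a) ` S)"

definition spanning_property :: "('a::euclidean_space \<Rightarrow> 'a) set \<Rightarrow> bool" where
  "spanning_property S \<longleftrightarrow>
     (\<forall>a\<in>usphere. polytope (orbit_polytope S a) \<and>
                   aff_dim (orbit_polytope S a) = int DIM('a))"

definition gamma_a :: "('a::euclidean_space \<Rightarrow> 'a) set \<Rightarrow> 'a \<Rightarrow> real" where
  "gamma_a S a = (SUP x\<in>usphere. support_fun (orbit_polytope S a) x) /
                 (INF x\<in>usphere. support_fun (orbit_polytope S a) x)"

definition gamma_max :: "('a::euclidean_space \<Rightarrow> 'a) set \<Rightarrow> real" where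
  "gamma_max S = (SUP a\<in>usphere. gamma_a S a)"

definition K0 :: "('a::euclidean_space \<Rightarrow> 'a) set \<Rightarrow> 'a set set" where
  "K0 S = {\<Omega>. compact \<Omega> \<and> convex \<Omega> \<and> interior \<Omega> \<noteq> {} \<and> 0 \<in> \<Omega> \<and>
              (\<forall>\<phi>\<in>S. \<phi> ` \<Omega> = \<Omega>)}"

definition Kp :: "real \<Rightarrow> ('a::euclidean_space \<Rightarrow> real) \<Rightarrow> ('a \<Rightarrow> 'a) set \<Rightarrow> 'a set set" where
  "Kp p f S = {\<Omega>\<in>K0 S.
     sphere_integral (\<lambda>x. f x * support_fun \<Omega> x powr p) = sphere_integral f}"

end

theory Submission
  imports Defs
begin

text \<open>Under the spanning property the orbit of a unit vector a is finite, has centroid 0 and is a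
  tight frame: \<open>\<Sum>q\<in>S a. (q \<bullet> v)\<^sup>2 = |S a| / (n+1) * |v|\<^sup>2\<close>. Hence every unit vector u satisfies
  \<open>u \<bullet> \<phi> a \<ge> 1 / (2(n+1))\<close> for some \<open>\<phi> \<in> S\<close>, and for an S-invariant body \<Omega> with support
  function h this gives \<open>|y| \<le> 2(n+1) h x\<close> for all \<open>y \<in> \<Omega>\<close> and unit x. So h is Lipschitz with
  constant \<open>2(n+1) h x\<^sub>0\<close> and stays below \<open>h x\<^sub>0 (1 + 1/|p|)\<close> on the cap of radius \<open>1/(2(n+1)|p|)\<close>
  around \<open>x\<^sub>0\<close>. Integrating \<open>f h\<^sup>p\<close> over the cone over that cap, the normalisation of \<open>K\<^sub>p\<close> yields
  \<open>h x\<^sub>0 powr p \<le> C\<^sub>n |p|\<^sup>n max f / min f\<close>, which is the claim because \<open>n + p < 0\<close>; the factor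
  \<open>\<gamma>\<^sub>m\<^sub>a\<^sub>x \<ge> 1\<close> only weakens it.\<close>

lemma norm_eq_1_not_in_open_segment:
  fixes x a b :: "'a::real_inner"
  assumes "norm x = 1" "norm a \<le> 1" "norm b \<le> 1"
  shows "x \<notin> open_segment a b"
proof
  assume "x \<in> open_segment a b"
  then obtain u where "a \<noteq> b" "0 < u" "u < 1" and x: "x = (1 - u) *\<^sub>R a + u *\<^sub>R b"
    by (auto simp: in_segment)
  have "norm x ^ 2 = (1 - u) * norm a ^ 2 + u * norm b ^ 2 - u * (1 - u) * norm (a - b) ^ 2"
    unfolding x power2_norm_eq_inner
    by (simp add: inner_add_left inner_add_right inner_diff_left inner_diff_right
        inner_commute[of b a] algebra_simps)
  moreover have "norm a ^ 2 \<le> 1" "norm b ^ 2 \<le> 1"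
    using assms by (auto simp: power_le_one)
  moreover have "0 < u * (1 - u) * norm (a - b) ^ 2"
    using \<open>a \<noteq> b\<close> \<open>0 < u\<close> \<open>u < 1\<close> by simp
  ultimately have "norm x ^ 2 < 1"
    using \<open>0 < u\<close> \<open>u < 1\<close> mult_left_le[of "norm a ^ 2" "1 - u"] mult_left_le[of "norm b ^ 2" u]
    by linarith
  then show False
    using assms by simp
qed

lemma polytope_convex_hull_sphere_imp_finite:
  fixes A :: "'a::euclidean_space set"
  assumes "A \<subseteq> sphere 0 1" "polytope (convex hull A)"
  shows "finite A"
proof -
  obtain T where T: "finite T" "convex hull A = convex hull T"
    using assms(2) unfolding polytope_def by blast
  have "convex hull A \<subseteq> cball 0 1"
    using assms(1) by (intro hull_minimal) auto
  then have "q extreme_point_of (convex hull A)" if "q \<in> A" for q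
    using that assms(1) norm_eq_1_not_in_open_segment
    unfolding extreme_point_of_def by (fastforce intro: hull_inc)
  then have "A \<subseteq> T"
    using T(2) extreme_point_of_convex_hull by fastforce
  then show ?thesis
    using T(1) finite_subset by blast
qed

lemma orthogonal_transformation_inner:
  "orthogonal_transformation f \<Longrightarrow> f v \<bullet> f w = v \<bullet> w"
  by (simp add: orthogonal_transformation_def)

lemma linear_coeff_eq_0_if_quadratic_nonneg:
  fixes b g :: real
  assumes "\<And>t. 0 \<le> 2 * t * b + t\<^sup>2 * g" "0 \<le> g"
  shows "b = 0"
proof (rule ccontr)
  assume "b \<noteq> 0"
  define t where "t = - b / (g + 1)"
  have "2 * t * b + t\<^sup>2 * g = (b\<^sup>2 / (g + 1)\<^sup>2) * (g - 2 * (g + 1))"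
    using \<open>0 \<le> g\<close> unfolding t_def power2_eq_square
    by (simp add: divide_simps) (simp add: algebra_simps)
  also have "\<dots> < 0"
    using \<open>b \<noteq> 0\<close> \<open>0 \<le> g\<close> by (intro mult_pos_neg) auto
  finally show False
    using assms(1)[of t] by linarith
qed

text \<open>The equality set of a semidefinite inequality between quadratic forms is the kernel
  of the difference form, hence a subspace.\<close>
lemma subspace_quadratic_equality_set:
  fixes A :: "'a::real_inner set"
  assumes ge: "\<And>v. \<mu> * (v \<bullet> v) \<le> (\<Sum>q\<in>A. (q \<bullet> v)\<^sup>2)"
  shows "subspace {v. (\<Sum>q\<in>A. (q \<bullet> v)\<^sup>2) = \<mu> * (v \<bullet> v)}"
proof -
  define b where "b v w = (\<Sum>q\<in>A. (q \<bullet> v) * (q \<bullet> w)) - \<mu> * (v \<bullet> w)" for v w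
  have b_expand: "b (v + t *\<^sub>R w) (v + t *\<^sub>R w) = b v v + 2 * t * b v w + t\<^sup>2 * b w w" for v w t
    unfolding b_def
    by (simp add: inner_add_left inner_add_right inner_commute[of w v] sum.distrib
        sum_distrib_left power2_eq_square algebra_simps)
  have b_nonneg: "0 \<le> b v v" for v
    using ge[of v] by (simp add: b_def power2_eq_square)
  have "b v w = 0" if "b v v = 0" for v w
  proof (rule linear_coeff_eq_0_if_quadratic_nonneg)
    show "0 \<le> 2 * t * b v w + t\<^sup>2 * b w w" for t
      using b_nonneg[of "v + t *\<^sub>R w"] b_expand[of v t w] that by simp
    show "0 \<le> b w w"
      by (rule b_nonneg)
  qed
  then have "{v. (\<Sum>q\<in>A. (q \<bullet> v)\<^sup>2) = \<mu> * (v \<bullet> v)} = {v. \<forall>w. b v w = 0}"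
    by (auto simp: b_def power2_eq_square)
  also have "subspace \<dots>"
    unfolding subspace_def b_def
    by (auto simp: inner_add_right sum.distrib algebra_simps simp flip: sum_distrib_left)
  finally show ?thesis .
qed

section \<open>Orbits under the spanning property\<close>

definition orbit :: "('a \<Rightarrow> 'a) set \<Rightarrow> 'a \<Rightarrow> 'a set" where
  "orbit S a = (\<lambda>\<phi>. \<phi> a) ` S"

lemma orbit_polytope_eq: "orbit_polytope S a = convex hull (orbit S a)"
  by (simp add: orbit_polytope_def orbit_def)

lemma spanning_propertyD:
  fixes S :: "('a::euclidean_space \<Rightarrow> 'a) set"
  shows "spanning_property S \<Longrightarrow> a \<in> usphere \<Longrightarrow>
     polytope (convex hull (orbit S a)) \<and> aff_dim (convex hull (orbit S a)) = int DIM('a)"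
  by (simp add: spanning_property_def orbit_polytope_eq)

lemma orth_subgroup_orthogonal: "orth_subgroup S \<Longrightarrow> \<phi> \<in> S \<Longrightarrow> orthogonal_transformation \<phi>"
  by (simp add: orth_subgroup_def)

lemma orth_subgroup_inj: "orth_subgroup S \<Longrightarrow> \<phi> \<in> S \<Longrightarrow> inj \<phi>"
  by (simp add: orth_subgroup_def orthogonal_transformation_inj)

lemma orth_subgroup_comp: "orth_subgroup S \<Longrightarrow> \<phi> \<in> S \<Longrightarrow> \<psi> \<in> S \<Longrightarrow> \<phi> \<circ> \<psi> \<in> S"
  by (simp add: orth_subgroup_def)

lemma self_in_orbit: "orth_subgroup S \<Longrightarrow> a \<in> orbit S a"
  unfolding orth_subgroup_def orbit_def by (metis id_apply image_eqI)

lemma norm_orbit: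
  assumes "orth_subgroup S" "q \<in> orbit S a"
  shows "norm q = norm a"
  using assms orth_subgroup_orthogonal orthogonal_transformation_norm
  unfolding orbit_def by blast

lemma image_orbit:
  assumes S: "orth_subgroup S" and fin: "finite (orbit S a)" and \<psi>: "\<psi> \<in> S"
  shows "\<psi> ` orbit S a = orbit S a"
proof -
  have "\<psi> ` orbit S a \<subseteq> orbit S a"
    using orth_subgroup_comp[OF S \<psi>] unfolding orbit_def by (auto simp: image_iff) (metis comp_apply)
  then show ?thesis
    using fin endo_inj_surj inj_on_subset[OF orth_subgroup_inj[OF S \<psi>]] by blast
qed

lemma sum_orbit_reindex:
  assumes "orth_subgroup S" "finite (orbit S a)" "\<psi> \<in> S"
  shows "(\<Sum>q\<in>orbit S a. F (\<psi> q)) = (\<Sum>q\<in>orbit S a. F q)"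
proof -
  have "(\<Sum>q\<in>orbit S a. F (\<psi> q)) = (\<Sum>q\<in>\<psi> ` orbit S a. F q)"
    using inj_on_subset[OF orth_subgroup_inj[OF assms(1,3)]] by (simp add: sum.reindex)
  then show ?thesis
    using image_orbit[OF assms] by simp
qed

lemma finite_orbit:
  assumes "orth_subgroup S" "spanning_property S" "a \<in> usphere"
  shows "finite (orbit S a)"
proof (rule polytope_convex_hull_sphere_imp_finite)
  show "orbit S a \<subseteq> sphere 0 1"
    using assms(1,3) norm_orbit by fastforce
  show "polytope (convex hull (orbit S a))"
    using spanning_propertyD[OF assms(2,3)] ..
qed

lemma spanning_property_invariant_subspace:
  fixes S :: "('a::euclidean_space \<Rightarrow> 'a) set"
  assumes "spanning_property S" "w \<in> usphere" "subspace V" "orbit S w \<subseteq> V"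
  shows "V = UNIV"
proof -
  have "int DIM('a) = aff_dim (orbit S w)"
    using spanning_propertyD[OF assms(1,2)] by (simp add: aff_dim_convex_hull)
  also have "\<dots> \<le> int (dim V)"
    using aff_dim_subset[OF assms(4)] aff_dim_subspace[OF assms(3)] by simp
  finally have "dim V = DIM('a)"
    using dim_subset_UNIV[of V] by simp
  then show ?thesis
    using assms(3) by (metis dim_eq_full span_eq_iff)
qed

lemma orbit_sum_eq_0:
  fixes S :: "('a::euclidean_space \<Rightarrow> 'a) set"
  assumes S: "orth_subgroup S" "spanning_property S" and "DIM('a) \<ge> 2" "a \<in> usphere"
  shows "(\<Sum>q\<in>orbit S a. q) = 0"
proof (rule ccontr)
  define c where "c = (\<Sum>q\<in>orbit S a. q)"
  assume "(\<Sum>q\<in>orbit S a. q) \<noteq> 0"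
  then have "c \<noteq> 0"
    by (simp add: c_def)
  have "\<psi> c = c" if "\<psi> \<in> S" for \<psi>
  proof -
    have "\<psi> c = (\<Sum>q\<in>orbit S a. \<psi> q)"
      unfolding c_def using orth_subgroup_orthogonal[OF S(1) that]
      by (simp add: orthogonal_transformation_linear linear_sum)
    also have "\<dots> = c"
      unfolding c_def using sum_orbit_reindex[OF S(1) finite_orbit[OF S \<open>a \<in> usphere\<close>] that] .
    finally show ?thesis .
  qed
  \<comment> \<open>c is fixed by S, so the orbit of c/|c| lies on a line.\<close>
  then have orbit_in_span: "orbit S (c /\<^sub>R norm c) \<subseteq> span {c}"
    using orth_subgroup_orthogonal[OF S(1)]
    by (auto simp: orbit_def orthogonal_transformation_linear linear_scale span_base span_mul)
  then have "span {c} = UNIV"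
    using spanning_property_invariant_subspace[OF S(2) _ subspace_span orbit_in_span] \<open>c \<noteq> 0\<close> by simp
  then have "DIM('a) = dim (span {c})"
    by simp
  also have "\<dots> \<le> card {c}"
    by (rule dim_le_card) auto
  finally show False
    using \<open>DIM('a) \<ge> 2\<close> by simp
qed

lemma sum_inner_square_min_on_sphere:
  fixes A :: "'a::euclidean_space set"
  obtains u where "u \<in> sphere 0 1" "\<And>v. (\<Sum>q\<in>A. (q \<bullet> u)\<^sup>2) * (v \<bullet> v) \<le> (\<Sum>q\<in>A. (q \<bullet> v)\<^sup>2)"
proof -
  define Q where "Q v = (\<Sum>q\<in>A. (q \<bullet> v)\<^sup>2)" for v
  have "continuous_on (sphere 0 1) Q"
    unfolding Q_def by (intro continuous_intros)
  moreover have "(sphere 0 1 :: 'a set) \<noteq> {}"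
    using SOME_Basis norm_Basis by (metis mem_sphere_0 empty_iff)
  ultimately obtain u where u: "u \<in> sphere 0 1" and u_min: "\<And>v. v \<in> sphere 0 1 \<Longrightarrow> Q u \<le> Q v"
    using continuous_attains_inf[OF compact_sphere] by blast
  have Q_scale: "Q (t *\<^sub>R v) = t\<^sup>2 * Q v" for t v
    unfolding Q_def by (simp add: power_mult_distrib sum_distrib_left)
  have "Q u * (v \<bullet> v) \<le> Q v" for v
  proof (cases "v = 0")
    case False
    have "Q v = (norm v)\<^sup>2 * Q (v /\<^sub>R norm v)"
      using Q_scale[of "norm v" "v /\<^sub>R norm v"] False by simp
    moreover have "Q u \<le> Q (v /\<^sub>R norm v)"
      using False by (intro u_min) simp
    ultimately show ?thesis
      by (simp add: power2_norm_eq_inner mult.commute[of "Q u"] mult_left_mono)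
  qed (simp add: Q_def)
  then show thesis
    using that u by (simp add: Q_def)
qed

lemma sum_orbit_inner_square_invariant:
  assumes "orth_subgroup S" "finite (orbit S a)" "\<psi> \<in> S"
  shows "(\<Sum>q\<in>orbit S a. (q \<bullet> \<psi> v)\<^sup>2) = (\<Sum>q\<in>orbit S a. (q \<bullet> v)\<^sup>2)"
proof -
  have "(\<Sum>q\<in>orbit S a. (q \<bullet> \<psi> v)\<^sup>2) = (\<Sum>q\<in>orbit S a. (\<psi> q \<bullet> \<psi> v)\<^sup>2)"
    by (rule sum_orbit_reindex[OF assms, symmetric])
  then show ?thesis
    using orthogonal_transformation_inner[OF orth_subgroup_orthogonal[OF assms(1,3)]] by simp
qed

lemma orbit_quadratic_form_isotropic:
  fixes S :: "('a::euclidean_space \<Rightarrow> 'a) set"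
  assumes S: "orth_subgroup S" "spanning_property S" and a: "a \<in> usphere"
  obtains \<mu> where "\<And>v. (\<Sum>q\<in>orbit S a. (q \<bullet> v)\<^sup>2) = \<mu> * (v \<bullet> v)"
proof -
  define Q where "Q v = (\<Sum>q\<in>orbit S a. (q \<bullet> v)\<^sup>2)" for v
  obtain u where u: "u \<in> usphere" and ge: "\<And>v. Q u * (v \<bullet> v) \<le> Q v"
    unfolding Q_def using sum_inner_square_min_on_sphere[of "orbit S a"] by blast
  define Z where "Z = {v. Q v = Q u * (v \<bullet> v)}"
  have "subspace Z"
    unfolding Z_def Q_def using ge[unfolded Q_def] by (rule subspace_quadratic_equality_set)
  moreover have "orbit S u \<subseteq> Z"
  proof
    fix w assume "w \<in> orbit S u"
    then obtain \<psi> where \<psi>: "\<psi> \<in> S" "w = \<psi> u"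
      by (auto simp: orbit_def)
    then show "w \<in> Z"
      using sum_orbit_inner_square_invariant[OF S(1) finite_orbit[OF S a] \<psi>(1)] u
        orthogonal_transformation_norm[OF orth_subgroup_orthogonal[OF S(1) \<psi>(1)]]
      by (simp add: Z_def Q_def dot_square_norm)
  qed
  ultimately have "Z = UNIV"
    by (rule spanning_property_invariant_subspace[OF S(2) u])
  then show thesis
    by (intro that[of "Q u"]) (auto simp: Z_def Q_def)
qed

lemma orbit_tight_frame:
  fixes S :: "('a::euclidean_space \<Rightarrow> 'a) set"
  assumes S: "orth_subgroup S" "spanning_property S" and a: "a \<in> usphere"
  shows "(\<Sum>q\<in>orbit S a. (q \<bullet> v)\<^sup>2) = card (orbit S a) / DIM('a) * (v \<bullet> v)"
proof -
  obtain \<mu> where \<mu>: "\<And>v. (\<Sum>q\<in>orbit S a. (q \<bullet> v)\<^sup>2) = \<mu> * (v \<bullet> v)"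
    using orbit_quadratic_form_isotropic[OF S a] by blast
  have "\<mu> * DIM('a) = (\<Sum>e\<in>Basis. \<Sum>q\<in>orbit S a. (q \<bullet> e)\<^sup>2)"
    by (simp add: \<mu>)
  also have "\<dots> = (\<Sum>q\<in>orbit S a. q \<bullet> q)"
    by (subst sum.swap) (simp add: euclidean_inner[symmetric] power2_eq_square)
  also have "\<dots> = card (orbit S a)"
    using norm_orbit[OF S(1)] a by (simp add: dot_square_norm)
  finally show ?thesis
    by (simp add: \<mu> field_simps)
qed

text \<open>Otherwise, with O the orbit, centroid 0 and the tight frame property would give
  \<open>|O| / (n+1) = (\<Sum>q\<in>O. (q \<bullet> u)\<^sup>2) \<le> (\<Sum>q\<in>O. \<bar>q \<bullet> u\<bar> + q \<bullet> u) < |O| / (n+1)\<close>.\<close>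
lemma orbit_meets_cap:
  fixes S :: "('a::euclidean_space \<Rightarrow> 'a) set"
  assumes S: "orth_subgroup S" "spanning_property S" and "DIM('a) \<ge> 2"
    and a: "a \<in> usphere" and u: "u \<in> usphere"
  shows "\<exists>\<phi>\<in>S. 1 / (2 * real DIM('a)) \<le> u \<bullet> \<phi> a"
proof (rule ccontr)
  let ?O = "orbit S a" and ?N = "real DIM('a)"
  assume "\<not> ?thesis"
  then have small: "q \<bullet> u < 1 / (2 * ?N)" if "q \<in> ?O" for q
    using that by (auto simp: orbit_def inner_commute)
  have fin: "finite ?O" and ne: "?O \<noteq> {}"
    using finite_orbit[OF S a] self_in_orbit[OF S(1)] by auto
  have le1: "\<bar>q \<bullet> u\<bar> \<le> 1" if "q \<in> ?O" for q
    using Cauchy_Schwarz_ineq2[of q u] norm_orbit[OF S(1) that] a u by simp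
  have "card ?O / ?N = (\<Sum>q\<in>?O. (q \<bullet> u)\<^sup>2)"
    using orbit_tight_frame[OF S a, of u] u by (simp add: dot_square_norm)
  also have "\<dots> \<le> (\<Sum>q\<in>?O. \<bar>q \<bullet> u\<bar>)"
  proof (intro sum_mono)
    fix q assume "q \<in> ?O"
    then have "\<bar>q \<bullet> u\<bar> * \<bar>q \<bullet> u\<bar> \<le> \<bar>q \<bullet> u\<bar>"
      using le1 by (intro mult_left_le_one_le) auto
    then show "(q \<bullet> u)\<^sup>2 \<le> \<bar>q \<bullet> u\<bar>"
      by (simp add: power2_eq_square)
  qed
  also have "\<dots> = (\<Sum>q\<in>?O. \<bar>q \<bullet> u\<bar> + q \<bullet> u)"
    using orbit_sum_eq_0[OF S \<open>DIM('a) \<ge> 2\<close> a]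
    by (simp add: sum.distrib inner_sum_left[symmetric])
  also have "\<dots> < (\<Sum>q\<in>?O. 1 / ?N)"
  proof (rule sum_strict_mono[OF fin ne])
    fix q assume "q \<in> ?O"
    then show "\<bar>q \<bullet> u\<bar> + q \<bullet> u < 1 / ?N"
      using small[of q] by (cases "0 \<le> q \<bullet> u") auto
  qed
  finally show False
    by simp
qed

section \<open>Support functions of invariant bodies\<close>

lemma inner_le_support_fun:
  fixes K :: "'a::euclidean_space set"
  assumes "bounded K" "y \<in> K"
  shows "x \<bullet> y \<le> support_fun K x"
proof -
  obtain R where "\<And>z. z \<in> K \<Longrightarrow> norm z \<le> R"
    using assms(1) by (auto simp: bounded_iff)
  then have "bdd_above ((\<bullet>) x ` K)"
    by (intro bdd_aboveI2[where M = "norm x * R"])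
      (metis norm_cauchy_schwarz mult_left_mono norm_ge_zero order_trans)
  then show ?thesis
    unfolding support_fun_def using assms(2) by (rule cSUP_upper2) simp
qed

lemma support_fun_le:
  fixes K :: "'a::euclidean_space set"
  assumes "K \<noteq> {}" "\<And>y. y \<in> K \<Longrightarrow> x \<bullet> y \<le> c"
  shows "support_fun K x \<le> c"
  unfolding support_fun_def using assms by (rule cSUP_least)

lemma lipschitz_on_support_fun:
  fixes K :: "'a::euclidean_space set"
  assumes "K \<noteq> {}" and R: "\<And>y. y \<in> K \<Longrightarrow> norm y \<le> R"
  shows "R-lipschitz_on UNIV (support_fun K)"
proof -
  have "bounded K"
    using R by (auto simp: bounded_iff)
  have le: "support_fun K u \<le> support_fun K x + R * norm (u - x)" for u x
  proof (rule support_fun_le[OF assms(1)])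
    fix y assume y: "y \<in> K"
    have "u \<bullet> y = x \<bullet> y + (u - x) \<bullet> y"
      by (simp add: inner_diff_left)
    also have "(u - x) \<bullet> y \<le> R * norm (u - x)"
      using norm_cauchy_schwarz[of "u - x" y] mult_left_mono[OF R[OF y], of "norm (u - x)"]
      by (simp add: mult.commute)
    also have "x \<bullet> y \<le> support_fun K x"
      using \<open>bounded K\<close> y by (rule inner_le_support_fun)
    finally show "u \<bullet> y \<le> support_fun K x + R * norm (u - x)"
      by simp
  qed
  obtain y where "y \<in> K"
    using assms(1) by blast
  then have "0 \<le> R"
    using R[of y] norm_ge_zero[of y] by linarith
  then show ?thesis
  proof (intro lipschitz_onI)
    fix u x :: 'a
    show "dist (support_fun K u) (support_fun K x) \<le> R * dist u x"
      using le[of u x] le[of x u] by (simp add: dist_real_def dist_norm norm_minus_commute abs_le_iff)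
  qed
qed

lemma borel_measurable_support_fun:
  fixes K :: "'a::euclidean_space set"
  assumes "K \<noteq> {}" "bounded K"
  shows "support_fun K \<in> borel_measurable borel"
proof -
  obtain R where "\<And>y. y \<in> K \<Longrightarrow> norm y \<le> R"
    using assms(2) by (auto simp: bounded_iff)
  then have "R-lipschitz_on UNIV (support_fun K)"
    by (rule lipschitz_on_support_fun[OF assms(1)])
  then show ?thesis
    by (intro borel_measurable_continuous_onI lipschitz_on_continuous_on)
qed

lemma SUP_div_INF_bounds:
  fixes g :: "'b \<Rightarrow> real"
  assumes "A \<noteq> {}" "0 < c" "\<And>x. x \<in> A \<Longrightarrow> c \<le> g x \<and> g x \<le> d"
  shows "1 \<le> (SUP x\<in>A. g x) / (INF x\<in>A. g x)" "(SUP x\<in>A. g x) / (INF x\<in>A. g x) \<le> d / c"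
proof -
  obtain x where "x \<in> A"
    using assms(1) by blast
  have bdd: "bdd_above (g ` A)" "bdd_below (g ` A)"
    using assms(3) by (metis bdd_aboveI2, metis bdd_belowI2)
  have inf: "c \<le> (INF x\<in>A. g x)" and sup: "(SUP x\<in>A. g x) \<le> d"
    using assms by (auto intro: cINF_greatest cSUP_least)
  have "(INF x\<in>A. g x) \<le> (SUP x\<in>A. g x)"
    using cINF_lower[OF bdd(2) \<open>x \<in> A\<close>] cSUP_upper[OF \<open>x \<in> A\<close> bdd(1)] by linarith
  then show "1 \<le> (SUP x\<in>A. g x) / (INF x\<in>A. g x)"
    using inf assms(2) by simp
  show "(SUP x\<in>A. g x) / (INF x\<in>A. g x) \<le> d / c"
    using inf sup assms(2) \<open>(INF x\<in>A. g x) \<le> (SUP x\<in>A. g x)\<close>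
    by (intro frac_le) auto
qed

lemma support_fun_orbit_polytope_bounds:
  fixes S :: "('a::euclidean_space \<Rightarrow> 'a) set"
  assumes S: "orth_subgroup S" "spanning_property S" and "DIM('a) \<ge> 2"
    and a: "a \<in> usphere" and x: "x \<in> usphere"
  shows "1 / (2 * real DIM('a)) \<le> support_fun (orbit_polytope S a) x"
    and "support_fun (orbit_polytope S a) x \<le> 1"
proof -
  let ?P = "orbit_polytope S a"
  have "?P \<subseteq> cball 0 1"
    unfolding orbit_polytope_eq using norm_orbit[OF S(1)] a by (intro hull_minimal) auto
  then have bounded: "bounded ?P" and le1: "\<And>y. y \<in> ?P \<Longrightarrow> norm y \<le> 1"
    by (auto intro: bounded_subset)
  obtain \<phi> where "\<phi> \<in> S" "1 / (2 * real DIM('a)) \<le> x \<bullet> \<phi> a"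
    using orbit_meets_cap[OF S \<open>DIM('a) \<ge> 2\<close> a x] by blast
  moreover have "\<phi> a \<in> ?P"
    unfolding orbit_polytope_eq orbit_def using \<open>\<phi> \<in> S\<close> by (intro hull_inc) blast
  ultimately show "1 / (2 * real DIM('a)) \<le> support_fun ?P x"
    using inner_le_support_fun[OF bounded] by (meson order_trans)
  show "support_fun ?P x \<le> 1"
  proof (rule support_fun_le)
    show "?P \<noteq> {}"
      using \<open>\<phi> a \<in> ?P\<close> by blast
    fix y assume "y \<in> ?P"
    then show "x \<bullet> y \<le> 1"
      using norm_cauchy_schwarz[of x y] le1[of y] x by simp
  qed
qed

lemma gamma_max_ge_1:
  fixes S :: "('a::euclidean_space \<Rightarrow> 'a) set"
  assumes S: "orth_subgroup S" "spanning_property S" and "DIM('a) \<ge> 2"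
  shows "1 \<le> gamma_max S"
proof -
  obtain e :: 'a where e: "e \<in> usphere"
    using SOME_Basis norm_Basis by (metis mem_sphere_0)
  have gamma_a: "1 \<le> gamma_a S a \<and> gamma_a S a \<le> 2 * real DIM('a)" if "a \<in> usphere" for a
  proof -
    have "1 / (2 * real DIM('a)) \<le> support_fun (orbit_polytope S a) x \<and>
        support_fun (orbit_polytope S a) x \<le> 1" if "x \<in> usphere" for x
      using support_fun_orbit_polytope_bounds[OF assms \<open>a \<in> usphere\<close> that] by blast
    from SUP_div_INF_bounds[of usphere, OF _ _ this] e show ?thesis
      unfolding gamma_a_def by auto
  qed
  have "bdd_above (gamma_a S ` usphere)"
    using gamma_a by (intro bdd_aboveI2[where M = "2 * real DIM('a)"]) blast
  then show ?thesis
    unfolding gamma_max_def using e gamma_a[OF e] by (blast intro: cSUP_upper2)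
qed

lemma K0D:
  assumes "\<Omega> \<in> K0 S"
  shows "compact \<Omega>" "interior \<Omega> \<noteq> {}" "0 \<in> \<Omega>" "\<And>\<phi>. \<phi> \<in> S \<Longrightarrow> \<phi> ` \<Omega> = \<Omega>"
  using assms unfolding K0_def by blast+

lemma K0_ex_nonzero:
  assumes "\<Omega> \<in> K0 S"
  obtains y where "y \<in> \<Omega>" "y \<noteq> 0"
proof -
  have "\<not> \<Omega> \<subseteq> {0}"
    using K0D(2)[OF assms] interior_mono interior_singleton by blast
  then show thesis
    using that by blast
qed

text \<open>Choose \<open>\<phi> \<in> S\<close> with \<open>(y /\<^sub>R norm y) \<bullet> \<phi> x \<ge> 1 / (2 * DIM('a))\<close>; since \<Omega> is S-invariant,
  \<open>y \<bullet> \<phi> x \<le> support_fun \<Omega> x\<close>.\<close>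
lemma norm_le_support_fun_K0:
  fixes S :: "('a::euclidean_space \<Rightarrow> 'a) set"
  assumes S: "orth_subgroup S" "spanning_property S" and "DIM('a) \<ge> 2"
    and \<Omega>: "\<Omega> \<in> K0 S" and x: "x \<in> usphere" and y: "y \<in> \<Omega>"
  shows "norm y \<le> 2 * real DIM('a) * support_fun \<Omega> x"
proof (cases "y = 0")
  case True
  then show ?thesis
    using inner_le_support_fun[OF compact_imp_bounded[OF K0D(1)[OF \<Omega>]] K0D(3)[OF \<Omega>], of x]
    by simp
next
  case False
  have u: "y /\<^sub>R norm y \<in> usphere"
    using False by simp
  obtain \<phi> where \<phi>: "\<phi> \<in> S" "1 / (2 * real DIM('a)) \<le> (y /\<^sub>R norm y) \<bullet> \<phi> x"
    using orbit_meets_cap[OF S \<open>DIM('a) \<ge> 2\<close> x u] by blast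
  obtain z where z: "z \<in> \<Omega>" "y = \<phi> z"
    using K0D(4)[OF \<Omega> \<phi>(1)] y by blast
  have "norm y / (2 * real DIM('a)) = norm y * (1 / (2 * real DIM('a)))"
    by simp
  also have "\<dots> \<le> norm y * ((y /\<^sub>R norm y) \<bullet> \<phi> x)"
    using \<phi>(2) by (rule mult_left_mono) simp
  also have "\<dots> = y \<bullet> \<phi> x"
    using False by simp
  also have "\<dots> = x \<bullet> z"
    using z(2) orthogonal_transformation_inner[OF orth_subgroup_orthogonal[OF S(1) \<phi>(1)]]
    by (simp add: inner_commute)
  also have "\<dots> \<le> support_fun \<Omega> x"
    using compact_imp_bounded[OF K0D(1)[OF \<Omega>]] z(1) by (rule inner_le_support_fun)
  finally show ?thesis
    by (simp add: field_simps)
qed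

lemma support_fun_K0_pos:
  fixes S :: "('a::euclidean_space \<Rightarrow> 'a) set"
  assumes "orth_subgroup S" "spanning_property S" "DIM('a) \<ge> 2" "\<Omega> \<in> K0 S"
  shows "\<exists>l>0. \<forall>u\<in>usphere. l \<le> support_fun \<Omega> u"
proof -
  obtain y where "y \<in> \<Omega>" "y \<noteq> 0"
    using K0_ex_nonzero[OF assms(4)] .
  then have "norm y / (2 * real DIM('a)) \<le> support_fun \<Omega> u" if "u \<in> usphere" for u
    using norm_le_support_fun_K0[OF assms that] by (simp add: field_simps)
  moreover have "0 < norm y / (2 * real DIM('a))"
    using \<open>y \<noteq> 0\<close> by simp
  ultimately show ?thesis
    by blast
qed

lemma support_fun_K0_cap:
  fixes S :: "('a::euclidean_space \<Rightarrow> 'a) set"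
  assumes "orth_subgroup S" "spanning_property S" "DIM('a) \<ge> 2" "\<Omega> \<in> K0 S"
    and x: "x \<in> usphere"
  shows "support_fun \<Omega> u \<le> support_fun \<Omega> x * (1 + 2 * real DIM('a) * norm (u - x))"
proof -
  have "(2 * real DIM('a) * support_fun \<Omega> x)-lipschitz_on UNIV (support_fun \<Omega>)"
    using K0D(3)[OF assms(4)] norm_le_support_fun_K0[OF assms(1-4) x]
    by (intro lipschitz_on_support_fun) auto
  then have "dist (support_fun \<Omega> u) (support_fun \<Omega> x) \<le> 2 * real DIM('a) * support_fun \<Omega> x * dist u x"
    by (rule lipschitz_onD) auto
  then show ?thesis
    by (simp add: dist_real_def dist_norm algebra_simps abs_le_iff)
qed

section \<open>Integrals over the sphere\<close>

lemma integrable_indicator_ball: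
  "integrable lebesgue (indicator (ball (c::'a::euclidean_space) r) :: 'a \<Rightarrow> real)"
  using lmeasurable_iff_integrable lmeasurable_ball by blast

lemma measure_lebesgue_ball:
  fixes c :: "'a::euclidean_space"
  assumes "0 \<le> r"
  shows "measure lebesgue (ball c r) = r ^ DIM('a) * measure lborel (ball (0::'a) 1)"
  using content_ball_conv_unit_ball[OF assms, of c] by (simp add: measure_completion)

lemma integrable_sphere_integrand:
  fixes g :: "'a::euclidean_space \<Rightarrow> real"
  assumes g: "g \<in> borel_measurable borel" and B: "\<And>u. u \<in> usphere \<Longrightarrow> \<bar>g u\<bar> \<le> B"
  shows "integrable lebesgue (\<lambda>x. indicator (ball (0::'a) 1) x * g (x /\<^sub>R norm x))"
proof (rule Bochner_Integration.integrable_bound)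
  show "integrable lebesgue (\<lambda>x. B * indicator (ball (0::'a) 1) x)"
    by (intro integrable_mult_right integrable_indicator_ball)
  have "(\<lambda>x::'a. x /\<^sub>R norm x) \<in> borel_measurable borel"
    by measurable
  from measurable_compose[OF this g]
  have "(\<lambda>x. g (x /\<^sub>R norm x)) \<in> borel_measurable borel"
    by (simp add: comp_def)
  moreover have "(indicator (ball (0::'a) 1) :: 'a \<Rightarrow> real) \<in> borel_measurable borel"
    by (rule borel_measurable_indicator) simp
  ultimately have "(\<lambda>x. indicator (ball (0::'a) 1) x * g (x /\<^sub>R norm x)) \<in> borel_measurable lborel"
    by simp
  then show "(\<lambda>x. indicator (ball (0::'a) 1) x * g (x /\<^sub>R norm x)) \<in> borel_measurable lebesgue"
    by (rule measurable_completion)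
  show "AE x in lebesgue. norm (indicator (ball (0::'a) 1) x * g (x /\<^sub>R norm x))
      \<le> norm (B * indicator (ball (0::'a) 1) x :: real)"
  proof (rule AE_mp[OF AE_completion[OF AE_lborel_singleton[of 0]] AE_I2], intro impI)
    fix x :: 'a assume "x \<noteq> 0"
    then have "\<bar>g (x /\<^sub>R norm x)\<bar> \<le> B"
      using B by simp
    then show "norm (indicator (ball (0::'a) 1) x * g (x /\<^sub>R norm x))
        \<le> norm (B * indicator (ball (0::'a) 1) x :: real)"
      by (simp add: indicator_def)
  qed
qed

lemma sphere_integral_le:
  fixes g :: "'a::euclidean_space \<Rightarrow> real" and M :: real
  assumes "\<And>u. u \<in> usphere \<Longrightarrow> g u \<le> M" "0 \<le> M"
  shows "sphere_integral g \<le> DIM('a) * M * measure lborel (ball (0::'a) 1)"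
proof -
  have "(\<integral>x. indicator (ball (0::'a) 1) x * g (x /\<^sub>R norm x) \<partial>lebesgue)
      \<le> (\<integral>x. M * indicator (ball (0::'a) 1) x \<partial>lebesgue)"
  proof (rule integral_mono_AE')
    show "integrable lebesgue (\<lambda>x. M * indicator (ball (0::'a) 1) x)"
      by (intro integrable_mult_right integrable_indicator_ball)
    show "AE x in lebesgue. indicator (ball (0::'a) 1) x * g (x /\<^sub>R norm x)
        \<le> M * indicator (ball (0::'a) 1) x"
    proof (rule AE_mp[OF AE_completion[OF AE_lborel_singleton[of 0]] AE_I2], intro impI)
      fix x :: 'a assume "x \<noteq> 0"
      then show "indicator (ball (0::'a) 1) x * g (x /\<^sub>R norm x) \<le> M * indicator (ball (0::'a) 1) x"
        using assms(1) by (simp add: indicator_def)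
    qed
    show "AE x in lebesgue. 0 \<le> M * indicator (ball (0::'a) 1) x"
      using assms(2) by simp
  qed
  then show ?thesis
    using measure_lebesgue_ball[of 1 "0::'a"] by (simp add: sphere_integral_def mult.assoc)
qed

lemma integral_ge_disjoint_balls:
  fixes G :: "'a::euclidean_space \<Rightarrow> real" and c r :: real
  assumes "finite I" "disjoint_family_on (\<lambda>k. ball (z k) r) I" "0 \<le> r"
    and "integrable lebesgue G" "AE x in lebesgue. 0 \<le> G x"
    and "\<And>k x. k \<in> I \<Longrightarrow> x \<in> ball (z k) r \<Longrightarrow> c \<le> G x"
  shows "card I * c * r ^ DIM('a) * measure lborel (ball (0::'a) 1) \<le> (\<integral>x. G x \<partial>lebesgue)"
proof -
  have "(\<integral>x. (\<Sum>k\<in>I. c * indicator (ball (z k) r) x) \<partial>lebesgue)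
      = (\<Sum>k\<in>I. c * measure lebesgue (ball (z k) r))"
    by (simp add: integrable_indicator_ball)
  also have "\<dots> = card I * c * r ^ DIM('a) * measure lborel (ball (0::'a) 1)"
    by (simp add: content_ball_conv_unit_ball[OF \<open>0 \<le> r\<close>] mult.assoc)
  finally have "card I * c * r ^ DIM('a) * measure lborel (ball (0::'a) 1)
      = (\<integral>x. (\<Sum>k\<in>I. c * indicator (ball (z k) r) x) \<partial>lebesgue)" ..
  also have "\<dots> \<le> (\<integral>x. G x \<partial>lebesgue)"
    using assms(5)
  proof (intro integral_mono_AE'[OF assms(4)], eventually_elim)
    fix x assume "0 \<le> G x"
    show "(\<Sum>k\<in>I. c * indicator (ball (z k) r) x) \<le> G x"
    proof (cases "\<exists>k\<in>I. x \<in> ball (z k) r")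
      case True
      then obtain k where "k \<in> I" "x \<in> ball (z k) r"
        by blast
      then show ?thesis
        using sum_indicator_disjoint_family[OF assms(2) _ assms(1), of x k "\<lambda>_. c"] assms(6)
        by simp
    qed (simp add: \<open>0 \<le> G x\<close>)
  qed
  finally show ?thesis .
qed

lemma disjoint_balls_on_ray:
  fixes x0 :: "'a::real_normed_vector"
  assumes "norm x0 = 1" "0 < r"
  shows "disjoint_family_on (\<lambda>k. ball ((a + 2 * r * real k) *\<^sub>R x0) r) I"
  unfolding disjoint_family_on_def
proof (intro ballI impI equals0I)
  let ?c = "\<lambda>k. (a + 2 * r * real k) *\<^sub>R x0"
  fix i j :: nat and x assume "i \<noteq> j" and x: "x \<in> ball (?c i) r \<inter> ball (?c j) r"
  have "2 * r \<le> 2 * r * \<bar>real i - real j\<bar>"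
    using \<open>i \<noteq> j\<close> \<open>0 < r\<close> by simp
  also have "\<dots> = \<bar>(a + 2 * r * real i) - (a + 2 * r * real j)\<bar>"
    using \<open>0 < r\<close> by (simp add: abs_mult flip: right_diff_distrib)
  also have "\<dots> = dist (?c i) (?c j)"
    using assms(1) by (simp add: dist_norm flip: scaleR_diff_left)
  also have "\<dots> < r + r"
    using x by (intro dist_triangle_less_add) (auto simp: dist_commute)
  finally show False
    by simp
qed

lemma norm_sgn_diff_scaleR:
  fixes x :: "'a::real_normed_vector"
  assumes "x \<noteq> 0" "0 < s"
  shows "norm (x /\<^sub>R norm x - x /\<^sub>R s) = \<bar>s - norm x\<bar> / s"
proof -
  have "inverse (norm x) - inverse s = (s - norm x) / (s * norm x)"
    using assms by (simp add: field_simps)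
  then have "x /\<^sub>R norm x - x /\<^sub>R s = ((s - norm x) / (s * norm x)) *\<^sub>R x"
    by (metis scaleR_diff_left)
  then show ?thesis
    using assms by (simp add: abs_mult)
qed

lemma ball_on_ray_normalize_close:
  fixes x0 :: "'a::real_normed_vector"
  assumes x0: "norm x0 = 1" and s: "1 / 2 \<le> s" and x: "x \<in> ball (s *\<^sub>R x0) r" and r: "r \<le> 1 / 4"
  shows "x \<noteq> 0" "norm x < s + r" "norm (x /\<^sub>R norm x - x0) \<le> 4 * r"
proof -
  have xr: "norm (x - s *\<^sub>R x0) < r"
    using x by (simp add: dist_norm norm_minus_commute)
  have "\<bar>norm x - s\<bar> \<le> norm (x - s *\<^sub>R x0)"
    using norm_triangle_ineq3[of x "s *\<^sub>R x0"] x0 s by simp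
  then have d: "\<bar>s - norm x\<bar> < r"
    using xr by linarith
  then show "norm x < s + r"
    by linarith
  show "x \<noteq> 0"
    using d s r by auto
  have "x /\<^sub>R s - x0 = (1 / s) *\<^sub>R (x - s *\<^sub>R x0)"
    using s by (simp add: algebra_simps inverse_eq_divide)
  then have "norm (x /\<^sub>R s - x0) = norm (x - s *\<^sub>R x0) / s"
    using s by simp
  moreover have "norm (x /\<^sub>R norm x - x0) \<le> norm (x /\<^sub>R norm x - x /\<^sub>R s) + norm (x /\<^sub>R s - x0)"
    using norm_triangle_ineq[of "x /\<^sub>R norm x - x /\<^sub>R s" "x /\<^sub>R s - x0"] by simp
  moreover have "(\<bar>s - norm x\<bar> + norm (x - s *\<^sub>R x0)) / s \<le> 2 * r / s"
    using d xr s by (intro divide_right_mono) auto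
  ultimately have "norm (x /\<^sub>R norm x - x0) \<le> 2 * r / s"
    using norm_sgn_diff_scaleR[OF \<open>x \<noteq> 0\<close>, of s] s by (simp add: add_divide_distrib)
  also have "\<dots> \<le> 2 * r / (1 / 2)"
    using s d by (intro divide_left_mono) auto
  finally show "norm (x /\<^sub>R norm x - x0) \<le> 4 * r"
    by simp
qed

lemma ball_on_ray_in_cone:
  fixes x0 :: "'a::real_normed_vector"
  assumes x0: "norm x0 = 1" and r: "0 < r" "2 * r * real K \<le> 1 / 4" and "k < K"
    and x: "x \<in> ball ((1 / 2 + 2 * r * real k) *\<^sub>R x0) r"
  shows "x /\<^sub>R norm x \<in> sphere 0 1" "norm x < 1" "norm (x /\<^sub>R norm x - x0) \<le> 4 * r"
proof -
  have "2 * r * (real k + 1) \<le> 2 * r * real K"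
    using r(1) \<open>k < K\<close> by (intro mult_left_mono) auto
  then have "2 * r * real k + 2 * r \<le> 2 * r * real K"
    by (simp only: distrib_left mult_1_right)
  moreover have "0 \<le> 2 * r * real k"
    using r(1) by simp
  ultimately have "r \<le> 1 / 4" "1 / 2 + 2 * r * real k + r < 1"
    using r by linarith+
  moreover have "1 / 2 \<le> 1 / 2 + 2 * r * real k"
    using r(1) by simp
  ultimately show "x /\<^sub>R norm x \<in> sphere 0 1" "norm x < 1" "norm (x /\<^sub>R norm x - x0) \<le> 4 * r"
    using ball_on_ray_normalize_close[OF x0 _ x] by force+
qed

lemma nat_floor_ge_half:
  fixes y :: real
  assumes "1 \<le> y"
  shows "y / 2 \<le> real (nat \<lfloor>y\<rfloor>)"
proof -
  have "1 \<le> \<lfloor>y\<rfloor>"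
    using assms by (simp add: le_floor_iff)
  then have "real (nat \<lfloor>y\<rfloor>) = of_int \<lfloor>y\<rfloor>" "1 \<le> real_of_int \<lfloor>y\<rfloor>"
    by (simp, metis of_int_1 of_int_le_iff)
  then show ?thesis
    using real_of_int_floor_add_one_gt[of y] by linarith
qed

text \<open>About 1/(2\<delta>) disjoint balls of radius \<delta>/4, centred on the segment from x0/2 to 3x0/4, lie
  in the cone over the \<delta>-cap around x0; they fill a volume of order \<delta>^(n+1)/\<delta> = \<delta>^n.\<close>
lemma sphere_integral_cap_ge:
  fixes g :: "'a::euclidean_space \<Rightarrow> real" and x0 :: 'a and c \<delta> :: real
  assumes g: "g \<in> borel_measurable borel" and bounds: "\<And>u. u \<in> usphere \<Longrightarrow> 0 \<le> g u \<and> g u \<le> B"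
    and x0: "x0 \<in> usphere" and \<delta>: "0 < \<delta>" "\<delta> \<le> 1 / 2"
    and cap: "\<And>u. u \<in> usphere \<Longrightarrow> norm (u - x0) \<le> \<delta> \<Longrightarrow> c \<le> g u" and "0 \<le> c"
  shows "DIM('a) * c * measure lborel (ball (0::'a) 1) \<le> 16 * (4 / \<delta>) ^ (DIM('a) - 1) * sphere_integral g"
proof -
  let ?n = "DIM('a) - 1" and ?V = "measure lborel (ball (0::'a) 1)"
  define r where "r = \<delta> / 4"
  define K where "K = nat \<lfloor>1 / (8 * r)\<rfloor>"
  define z where "z k = (1 / 2 + 2 * r * real k) *\<^sub>R x0" for k
  define G where "G x = indicator (ball (0::'a) 1) x * g (x /\<^sub>R norm x)" for x
  have r: "0 < r" "r \<le> 1 / 8"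
    using \<delta> by (auto simp: r_def)
  then have "1 \<le> 1 / (8 * r)"
    by (simp add: field_simps)
  then have "1 / (16 * r) \<le> real K" "real K \<le> 1 / (8 * r)"
    using nat_floor_ge_half[of "1 / (8 * r)"] of_nat_floor[of "1 / (8 * r)"] r(1)
    unfolding K_def by simp_all
  then have Kr: "1 / 16 \<le> real K * r" "2 * r * real K \<le> 1 / 4"
    using r(1) by (simp_all add: field_simps)
  have "c \<le> G x" if "k \<in> {..<K}" "x \<in> ball (z k) r" for k x
    using ball_on_ray_in_cone[OF _ r(1) Kr(2) _ that(2)[unfolded z_def]] that(1) x0 cap
    by (simp add: G_def r_def)
  moreover have "AE x in lebesgue. 0 \<le> G x"
    using AE_completion[OF AE_lborel_singleton[of 0]]
    by (rule AE_mp) (auto simp: G_def bounds)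
  moreover have "integrable lebesgue G"
    unfolding G_def using g bounds by (intro integrable_sphere_integrand[where B = B]) auto
  moreover have "disjoint_family_on (\<lambda>k. ball (z k) r) {..<K}"
    unfolding z_def using x0 r(1) by (intro disjoint_balls_on_ray) auto
  ultimately have "real K * c * r ^ DIM('a) * ?V \<le> (\<integral>x. G x \<partial>lebesgue)"
    using integral_ge_disjoint_balls[where I = "{..<K}" and z = z and r = r and G = G and c = c] r(1)
    by simp
  moreover have "r ^ DIM('a) = r * r ^ ?n"
    by (subst power_Suc[symmetric]) simp
  moreover have "(1 / 16) * (c * ?V * r ^ ?n) \<le> (real K * r) * (c * ?V * r ^ ?n)"
    using Kr(1) \<open>0 \<le> c\<close> r(1) by (intro mult_right_mono) auto
  ultimately have "c * ?V * r ^ ?n \<le> 16 * (\<integral>x. G x \<partial>lebesgue)"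
    by (simp add: mult_ac)
  then have "c * ?V \<le> 16 * (4 / \<delta>) ^ ?n * (\<integral>x. G x \<partial>lebesgue)"
    using r(1) by (simp add: r_def power_divide field_simps)
  then show ?thesis
    using mult_left_mono[of _ _ "real DIM('a)"] by (simp add: sphere_integral_def G_def mult_ac)
qed

lemma sphere_integral_powr_cap_estimate:
  fixes f h :: "'a::euclidean_space \<Rightarrow> real"
  assumes f: "f \<in> borel_measurable borel" "\<And>u. u \<in> usphere \<Longrightarrow> c1 \<le> f u \<and> f u \<le> c2" "0 < c1"
    and h: "h \<in> borel_measurable borel" "0 < l" "\<And>u. u \<in> usphere \<Longrightarrow> l \<le> h u"
    and "p \<le> 0" and x0: "x0 \<in> usphere" and \<delta>: "0 < \<delta>" "\<delta> \<le> 1 / 2"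
    and cap: "\<And>u. u \<in> usphere \<Longrightarrow> norm (u - x0) \<le> \<delta> \<Longrightarrow> h u \<le> H"
    and eq: "sphere_integral (\<lambda>u. f u * h u powr p) = sphere_integral f"
  shows "(INF u\<in>usphere. f u) * H powr p \<le> 16 * (4 / \<delta>) ^ (DIM('a) - 1) * (SUP u\<in>usphere. f u)"
proof -
  let ?mf = "INF u\<in>usphere. f u" and ?Mf = "SUP u\<in>usphere. f u"
  have bdd: "bdd_below (f ` usphere)" "bdd_above (f ` usphere)"
    using f(2) by (metis bdd_belowI2, metis bdd_aboveI2)
  have mf: "c1 \<le> ?mf" "\<And>u. u \<in> usphere \<Longrightarrow> ?mf \<le> f u"
    using f(2) x0 by (auto intro: cINF_greatest cINF_lower[OF bdd(1)])
  have Mf: "\<And>u. u \<in> usphere \<Longrightarrow> f u \<le> ?Mf"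
    by (rule cSUP_upper[OF _ bdd(2)])
  have "0 < H"
    using cap[OF x0] h(2) h(3)[OF x0] \<delta>(1) by simp
  have nonneg: "0 \<le> ?mf * H powr p"
    using mf(1) f(3) by simp
  have lower: "?mf * H powr p \<le> f u * h u powr p" if "u \<in> usphere" "norm (u - x0) \<le> \<delta>" for u
    using mf(2)[OF that(1)] powr_mono2'[OF \<open>p \<le> 0\<close> _ cap[OF that]] h(2) h(3)[OF that(1)] mf(1) f(3)
    by (intro mult_mono) auto
  have meas: "(\<lambda>u. f u * h u powr p) \<in> borel_measurable borel"
    using f(1) h(1) by measurable
  have bounds: "0 \<le> f u * h u powr p \<and> f u * h u powr p \<le> c2 * l powr p" if "u \<in> usphere" for u
    using f(2)[OF that] f(3) h(2) h(3)[OF that] powr_mono2'[OF \<open>p \<le> 0\<close> h(2) h(3)[OF that]] that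
    by (auto intro: mult_mono)
  have "DIM('a) * (?mf * H powr p) * measure lborel (ball (0::'a) 1)
      \<le> 16 * (4 / \<delta>) ^ (DIM('a) - 1) * sphere_integral (\<lambda>u. f u * h u powr p)"
    by (rule sphere_integral_cap_ge[OF meas bounds x0 \<delta> lower nonneg])
  also have "\<dots> = 16 * (4 / \<delta>) ^ (DIM('a) - 1) * sphere_integral f"
    by (simp add: eq)
  also have "\<dots> \<le> 16 * (4 / \<delta>) ^ (DIM('a) - 1) * (DIM('a) * ?Mf * measure lborel (ball (0::'a) 1))"
    using Mf mf(2)[OF x0] Mf[OF x0] mf(1) f(3) \<delta>(1) by (intro mult_left_mono sphere_integral_le) auto
  finally show ?thesis
    using content_ball_pos[of 1 "0::'a"] by (simp add: mult_ac)
qed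

lemma exp_neg_1_le_powr:
  fixes P :: real
  assumes "0 < P"
  shows "exp (- 1) \<le> (1 + 1 / P) powr (- P)"
proof -
  have "ln (1 + 1 / P) \<le> 1 / P"
    using assms by (intro ln_add_one_self_le_self) simp
  then have "- 1 \<le> - P * ln (1 + 1 / P)"
    using assms by (simp add: field_simps)
  moreover have "0 < 1 + 1 / P"
    using assms by (simp add: add_pos_pos)
  ultimately show ?thesis
    by (simp add: powr_def)
qed

lemma powr_inverse_le:
  fixes m X p q :: real
  assumes "0 < m" "1 \<le> X" "m powr p \<le> X" "p \<le> q" "q < 0"
  shows "X powr (1 / q) \<le> m"
proof (cases "1 \<le> m")
  case True
  have "X powr (1 / q) \<le> X powr 0"
    using assms by (intro powr_mono) (auto simp: divide_nonpos_pos)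
  then show ?thesis
    using True assms(2) by simp
next
  case False
  have "m powr q \<le> X"
    using powr_mono'[OF \<open>p \<le> q\<close>, of m] False assms(1,3) by simp
  then have "X powr (1 / q) \<le> (m powr q) powr (1 / q)"
    using assms by (intro powr_mono2') (auto simp: divide_nonpos_neg)
  also have "\<dots> = m"
    using assms by (simp add: powr_powr)
  finally show ?thesis .
qed

lemma Kp_cap_estimate:
  fixes S :: "('a::euclidean_space \<Rightarrow> 'a) set"
  assumes S: "orth_subgroup S" "spanning_property S" and "DIM('a) \<ge> 2"
    and f: "f \<in> borel_measurable borel" "\<And>u. u \<in> usphere \<Longrightarrow> c1 \<le> f u \<and> f u \<le> c2" "0 < c1"
    and \<Omega>: "\<Omega> \<in> Kp p f S" and "p \<le> - 1" and x0: "x0 \<in> usphere"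
  shows "(INF u\<in>usphere. f u) * (support_fun \<Omega> x0 * (1 - 1 / p)) powr p
    \<le> 16 * (8 * real DIM('a) * (- p)) ^ (DIM('a) - 1) * (SUP u\<in>usphere. f u)"
proof -
  let ?N = "real DIM('a)" and ?n = "DIM('a) - 1" and ?h = "support_fun \<Omega>"
  define m where "m = ?h x0"
  define \<delta> where "\<delta> = 1 / (2 * ?N * (- p))"
  have K0: "\<Omega> \<in> K0 S" and eq: "sphere_integral (\<lambda>u. f u * ?h u powr p) = sphere_integral f"
    using \<Omega> by (auto simp: Kp_def)
  obtain l where l: "0 < l" "\<And>u. u \<in> usphere \<Longrightarrow> l \<le> ?h u"
    using support_fun_K0_pos[OF S \<open>DIM('a) \<ge> 2\<close> K0] by blast
  have "0 < m"
    using l(1) l(2)[OF x0] by (simp add: m_def)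
  have "2 \<le> ?N * (- p)"
    using \<open>p \<le> - 1\<close> \<open>DIM('a) \<ge> 2\<close> mult_mono[of 2 ?N 1 "- p"] by simp
  then have \<delta>: "0 < \<delta>" "\<delta> \<le> 1 / 2"
    by (auto simp: \<delta>_def field_simps)
  have "?h \<in> borel_measurable borel"
    using K0D(1,3)[OF K0] by (intro borel_measurable_support_fun compact_imp_bounded) auto
  moreover have "?h u \<le> m * (1 - 1 / p)" if "u \<in> usphere" "norm (u - x0) \<le> \<delta>" for u
  proof -
    have "?h u \<le> m * (1 + 2 * ?N * norm (u - x0))"
      unfolding m_def by (rule support_fun_K0_cap[OF S \<open>DIM('a) \<ge> 2\<close> K0 x0])
    also have "\<dots> \<le> m * (1 + 2 * ?N * \<delta>)"
      using that(2) \<open>0 < m\<close> by (intro mult_left_mono) auto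
    finally show ?thesis
      using \<open>p \<le> - 1\<close> by (simp add: \<delta>_def)
  qed
  moreover have "4 / \<delta> = 8 * ?N * (- p)"
    by (simp add: \<delta>_def)
  ultimately show ?thesis
    using sphere_integral_powr_cap_estimate[OF f _ l(1) l(2) _ x0 \<delta> _ eq] \<open>p \<le> - 1\<close>
    by (simp add: m_def)
qed

definition lower_bound_const :: "nat \<Rightarrow> real" where
  "lower_bound_const N = 16 * exp 1 * (8 * real N) ^ (N - 1)"

lemma one_le_lower_bound_const:
  assumes "1 \<le> N"
  shows "1 \<le> lower_bound_const N"
proof -
  have "1 * 1 \<le> exp 1 * (8 * real N) ^ (N - 1)"
    using assms by (intro mult_mono one_le_power) auto
  then show ?thesis
    by (simp add: lower_bound_const_def)
qed

text \<open>The factor \<open>(1 - 1/p) powr p \<ge> 1/e\<close> is where the constant e comes from.\<close>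
lemma Kp_support_fun_powr_le:
  fixes S :: "('a::euclidean_space \<Rightarrow> 'a) set"
  assumes S: "orth_subgroup S" "spanning_property S" and "DIM('a) \<ge> 2"
    and f: "f \<in> borel_measurable borel" "\<And>u. u \<in> usphere \<Longrightarrow> c1 \<le> f u \<and> f u \<le> c2" "0 < c1"
    and \<Omega>: "\<Omega> \<in> Kp p f S" and "p \<le> - 1" and x0: "x0 \<in> usphere"
  shows "support_fun \<Omega> x0 powr p
    \<le> (- p) ^ (DIM('a) - 1) * lower_bound_const DIM('a) * ((SUP u\<in>usphere. f u) / (INF u\<in>usphere. f u))"
proof -
  let ?n = "DIM('a) - 1" and ?m = "support_fun \<Omega> x0"
  let ?mf = "INF u\<in>usphere. f u" and ?Mf = "SUP u\<in>usphere. f u"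
  have "c1 \<le> ?mf"
    using f(2) x0 by (intro cINF_greatest) auto
  then have "0 < ?mf"
    using f(3) by linarith
  have "exp (- 1) \<le> (1 - 1 / p) powr p"
    using exp_neg_1_le_powr[of "- p"] \<open>p \<le> - 1\<close> by simp
  then have "?mf * (?m powr p * exp (- 1)) \<le> ?mf * (?m * (1 - 1 / p)) powr p"
    using \<open>0 < ?mf\<close> \<open>p \<le> - 1\<close> by (simp add: powr_mult mult_left_mono)
  also have "\<dots> \<le> 16 * (8 * real DIM('a) * (- p)) ^ ?n * ?Mf"
    by (rule Kp_cap_estimate[OF assms])
  finally have "?m powr p \<le> 16 * exp 1 * (8 * real DIM('a) * (- p)) ^ ?n * (?Mf / ?mf)"
    using \<open>0 < ?mf\<close> by (simp add: exp_minus field_simps)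
  then show ?thesis
    unfolding lower_bound_const_def power_mult_distrib[of "8 * real DIM('a)" "- p"]
    by (simp only: mult_ac)
qed

theorem lemma3p3:
  assumes "DIM('a::euclidean_space) \<ge> 2"
  shows "\<exists>C>0. \<forall>(p::real) (S::('a \<Rightarrow> 'a) set) (f::'a \<Rightarrow> real) c1 c2 \<Omega>.
     p < - real (DIM('a) - 1) \<longrightarrow>
     orth_subgroup S \<longrightarrow> discrete_maps S \<longrightarrow> spanning_property S \<longrightarrow>
     f \<in> borel_measurable borel \<longrightarrow>
     (\<forall>\<phi>\<in>S. \<forall>x\<in>usphere. f (\<phi> x) = f x) \<longrightarrow>
     0 < c1 \<longrightarrow> (\<forall>x\<in>usphere. c1 \<le> f x \<and> f x \<le> c2) \<longrightarrow>
     \<Omega> \<in> Kp p f S \<longrightarrow>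
     (\<forall>x\<in>usphere. support_fun \<Omega> x \<ge>
        ((-p) ^ (DIM('a) - 1) * C * gamma_max S *
          ((SUP y\<in>usphere. f y) / (INF y\<in>usphere. f y)))
        powr (1 / (real (DIM('a) - 1) + p)))"
proof (intro exI[of _ "lower_bound_const DIM('a)"] conjI allI impI ballI)
  let ?n = "DIM('a) - 1" and ?C = "lower_bound_const DIM('a)"
  show "0 < ?C"
    using one_le_lower_bound_const[of "DIM('a)"] by simp
  fix p c1 c2 :: real and S :: "('a \<Rightarrow> 'a) set" and f :: "'a \<Rightarrow> real" and \<Omega> :: "'a set"
    and x :: 'a
  assume p: "p < - real ?n" and S: "orth_subgroup S" "discrete_maps S" "spanning_property S"
    and f: "f \<in> borel_measurable borel" "\<forall>\<phi>\<in>S. \<forall>x\<in>usphere. f (\<phi> x) = f x" "0 < c1"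
      "\<forall>x\<in>usphere. c1 \<le> f x \<and> f x \<le> c2"
    and \<Omega>: "\<Omega> \<in> Kp p f S" and x: "x \<in> usphere"
  let ?M = "(SUP y\<in>usphere. f y) / (INF y\<in>usphere. f y)"
  have "p \<le> - 1"
    using assms p by auto
  have "1 \<le> ?M"
    by (rule SUP_div_INF_bounds(1)[of usphere c1 f c2]) (use f(3,4) x in auto)
  then have "1 * 1 * 1 \<le> (- p) ^ ?n * ?C * ?M"
    using \<open>p \<le> - 1\<close> one_le_lower_bound_const[of "DIM('a)"] by (intro mult_mono one_le_power) auto
  moreover have "(- p) ^ ?n * ?C * ?M * 1 \<le> (- p) ^ ?n * ?C * ?M * gamma_max S"
    using calculation gamma_max_ge_1[OF S(1,3) assms] by (intro mult_left_mono) auto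
  moreover have "support_fun \<Omega> x powr p \<le> (- p) ^ ?n * ?C * ?M"
    by (rule Kp_support_fun_powr_le[OF S(1,3) assms f(1) f(4)[rule_format] f(3) \<Omega> \<open>p \<le> - 1\<close> x])
  moreover have "0 < support_fun \<Omega> x"
    using support_fun_K0_pos[OF S(1,3) assms] \<Omega> x by (fastforce simp: Kp_def)
  ultimately show "((- p) ^ ?n * ?C * gamma_max S * ?M) powr (1 / (real ?n + p)) \<le> support_fun \<Omega> x"
    using p by (intro powr_inverse_le[where p = p]) (auto simp: mult_ac)
qed

end
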